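(* Let $(X,r)$ be a non-degenerate set-theoretic solution of the Yang–Baxter equation such that its structure brace $G(X,r)$ is soluble, and regard $X$ as a subset of $G(X,r)$ via the canonical map $\iota$ (assumed injective). Suppose $G(X,r)$ has a chain $G(X,r)=I_0\supseteq I_1\supseteq\cdots\supseteq I_n=0$ with each $I_i$ an ideal of the brace $I_{i-1}$ and $I_{i-1}/I_i$ abelian, such that $X\cap I_{n-1}\neq\emptyset$. Then $(X,r)$ is multidecomposable.
   Context: A skew left brace (brace) is a set $B$ with two group structures $(B,+)$ and $(B,\cdot)$ such that $a(b+c)=ab-a+ac$; $\lambda_a(b)=-a+ab$. An ideal is a subset that is a normal subgroup of both groups and is $\lambda_b$-invariant for all $b$. For ideals $I,J$, $[I,J]$ is the smallest ideal containing $[I,J]_+$, $[I,J]_\cdot$ and all $ij-(i+j)$; a brace is abelian if $[B,B]=0$ (i.e. $ab=a+b=b+a$ for all $a,b$); it is soluble if it has a chain as in the claim. A solution $(X,r)$ is a set with a bijection $r:X\times X\to X\times X$ satisfying $r_{12}r_{23}r_{12}=r_{23}r_{12}r_{23}$, with both components of $r$ bijective; write $r(x,y)=(\lambda_x(y),\rho_y(x))$. $G(X,r)$ is the group $\langle x\in X\mid xy=uv \text{ whenever } r(x,y)=(u,v)\rangle$; it carries a brace structure (with this as multiplicative group) whose associated solution $r_G(g,h)=(\lambda^G_g(h),\lambda^G_g(h)^{-1}gh)$ satisfies $r_G\circ(\iota\times\iota)=(\iota\times\iota)\circ r$, where $\iota:X\to G(X,r)$ is the canonical map. For a partition $\mathcal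 P=\{X_i\}$ of $X$, $(X,r)$ is $\mathcal P$-decomposable if $r(X_i\times X_j)=X_j\times X_i$ for all $i,j$. $(X,r)$ is multidecomposable if there is a chain $X=X_0\supseteq X_1\supseteq\cdots\supseteq X_n$ with $|X_n|=1$ such that for each $0\le i\le n-1$ there is a partition $\mathcal P_i$ of $X_i$ with $X_{i+1}\in\mathcal P_i$ and $(X_i,r|_{X_i\times X_i})$ $\mathcal P_i$-decomposable. *)

theory Defs
  imports "HOL-Algebra.Coset"
begin

text \<open>A solution on the set X is a map r on X x X (values outside X x X irrelevant).
  We write r(x,y) = (lambda_x(y), rho_y(x)).\<close>

definition sol_lambda :: "('a \<times> 'a \<Rightarrow> 'a \<times> 'a) \<Rightarrow> 'a \<Rightarrow> 'a \<Rightarrow> 'a" where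
  "sol_lambda r x y = fst (r (x, y))"

definition sol_rho :: "('a \<times> 'a \<Rightarrow> 'a \<times> 'a) \<Rightarrow> 'a \<Rightarrow> 'a \<Rightarrow> 'a" where
  "sol_rho r y x = snd (r (x, y))"

definition r12 :: "('a \<times> 'a \<Rightarrow> 'a \<times> 'a) \<Rightarrow> 'a \<times> 'a \<times> 'a \<Rightarrow> 'a \<times> 'a \<times> 'a" where
  "r12 r t = (case t of (x, y, z) \<Rightarrow> (let (u, v) = r (x, y) in (u, v, z)))"

definition r23 :: "('a \<times> 'a \<Rightarrow> 'a \<times> 'a) \<Rightarrow> 'a \<times> 'a \<times> 'a \<Rightarrow> 'a \<times> 'a \<times> 'a" where
  "r23 r t = (case t of (x, y, z) \<Rightarrow> (let (u, v) = r (y, z) in (x, u, v)))"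

definition nondeg_solution :: "'a set \<Rightarrow> ('a \<times> 'a \<Rightarrow> 'a \<times> 'a) \<Rightarrow> bool" where
  "nondeg_solution X r \<longleftrightarrow>
     bij_betw r (X \<times> X) (X \<times> X) \<and>
     (\<forall>x\<in>X. \<forall>y\<in>X. \<forall>z\<in>X.
        r12 r (r23 r (r12 r (x, y, z))) = r23 r (r12 r (r23 r (x, y, z)))) \<and>
     (\<forall>x\<in>X. bij_betw (sol_lambda r x) X X) \<and>
     (\<forall>y\<in>X. bij_betw (sol_rho r y) X X)"

definition is_partition :: "'a set set \<Rightarrow> 'a set \<Rightarrow> bool" where
  "is_partition P Y \<longleftrightarrow> \<Union>P = Y \<and> {} \<notin> P \<and>
     (\<forall>A\<in>P. \<forall>B\<in>P. A \<noteq> B \<longrightarrow> A \<inter> B = {})"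

definition P_decomposable :: "'a set \<Rightarrow> ('a \<times> 'a \<Rightarrow> 'a \<times> 'a) \<Rightarrow> 'a set set \<Rightarrow> bool" where
  "P_decomposable Y r P \<longleftrightarrow> is_partition P Y \<and>
     (\<forall>A\<in>P. \<forall>B\<in>P. r ` (A \<times> B) = B \<times> A)"

definition multidecomposable :: "'a set \<Rightarrow> ('a \<times> 'a \<Rightarrow> 'a \<times> 'a) \<Rightarrow> bool" where
  "multidecomposable X r \<longleftrightarrow>
     (\<exists>(n::nat) (Xs :: nat \<Rightarrow> 'a set). Xs 0 = X \<and> card (Xs n) = 1 \<and>
        (\<forall>i<n. Xs (Suc i) \<subseteq> Xs i \<and>
           (\<exists>P. P_decomposable (Xs i) r P \<and> Xs (Suc i) \<in> P)))"

section \<open>Skew braces (HOL-Algebra records: A additive, M multiplicative)\<close>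

definition skew_brace :: "'b monoid \<Rightarrow> 'b monoid \<Rightarrow> bool" where
  "skew_brace A M \<longleftrightarrow> group A \<and> group M \<and> carrier A = carrier M \<and>
     (\<forall>a\<in>carrier M. \<forall>b\<in>carrier M. \<forall>c\<in>carrier M.
        a \<otimes>\<^bsub>M\<^esub> (b \<otimes>\<^bsub>A\<^esub> c)
        = (a \<otimes>\<^bsub>M\<^esub> b) \<otimes>\<^bsub>A\<^esub> inv\<^bsub>A\<^esub> a \<otimes>\<^bsub>A\<^esub> (a \<otimes>\<^bsub>M\<^esub> c))"

definition brace_lambda :: "'b monoid \<Rightarrow> 'b monoid \<Rightarrow> 'b \<Rightarrow> 'b \<Rightarrow> 'b" where
  "brace_lambda A M a b = inv\<^bsub>A\<^esub> a \<otimes>\<^bsub>A\<^esub> (a \<otimes>\<^bsub>M\<^esub> b)"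

definition brace_solution :: "'b monoid \<Rightarrow> 'b monoid \<Rightarrow> 'b \<times> 'b \<Rightarrow> 'b \<times> 'b" where
  "brace_solution A M p = (case p of (g, h) \<Rightarrow>
     (brace_lambda A M g h,
      inv\<^bsub>M\<^esub> (brace_lambda A M g h) \<otimes>\<^bsub>M\<^esub> g \<otimes>\<^bsub>M\<^esub> h))"

definition brace_ideal :: "'b monoid \<Rightarrow> 'b monoid \<Rightarrow> 'b set \<Rightarrow> bool" where
  "brace_ideal A M I \<longleftrightarrow> normal I A \<and> normal I M \<and>
     (\<forall>b\<in>carrier M. \<forall>i\<in>I. brace_lambda A M b i \<in> I)"

text \<open>The quotient brace (carrier J)/I is abelian: for all a,b in J,
  ab + I = (a+b) + I = (b+a) + I (cosets of the ideal I).\<close>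
definition abelian_quotient :: "'b monoid \<Rightarrow> 'b monoid \<Rightarrow> 'b set \<Rightarrow> bool" where
  "abelian_quotient A M I \<longleftrightarrow>
     (\<forall>a\<in>carrier M. \<forall>b\<in>carrier M.
        inv\<^bsub>A\<^esub> (a \<otimes>\<^bsub>A\<^esub> b) \<otimes>\<^bsub>A\<^esub> (a \<otimes>\<^bsub>M\<^esub> b) \<in> I \<and>
        inv\<^bsub>A\<^esub> (b \<otimes>\<^bsub>A\<^esub> a) \<otimes>\<^bsub>A\<^esub> (a \<otimes>\<^bsub>A\<^esub> b) \<in> I)"

definition soluble_chain :: "'b monoid \<Rightarrow> 'b monoid \<Rightarrow> (nat \<Rightarrow> 'b set) \<Rightarrow> nat \<Rightarrow> bool" where
  "soluble_chain A M I n \<longleftrightarrow> I 0 = carrier M \<and> I n = {\<one>\<^bsub>M\<^esub>} \<and>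
     (\<forall>i. 1 \<le> i \<and> i \<le> n \<longrightarrow>
        I i \<subseteq> I (i - 1) \<and>
        brace_ideal (A\<lparr>carrier := I (i - 1)\<rparr>) (M\<lparr>carrier := I (i - 1)\<rparr>) (I i) \<and>
        abelian_quotient (A\<lparr>carrier := I (i - 1)\<rparr>) (M\<lparr>carrier := I (i - 1)\<rparr>) (I i))"

definition soluble_brace :: "'b monoid \<Rightarrow> 'b monoid \<Rightarrow> bool" where
  "soluble_brace A M \<longleftrightarrow> (\<exists>I n. soluble_chain A M I n)"

text \<open>Words over X and X^{-1}: (x, True) is x, (x, False) is x^{-1}.\<close>
definition words_on :: "'a set \<Rightarrow> ('a \<times> bool) list set" where
  "words_on X = {w. \<forall>p\<in>set w. fst p \<in> X}"

inductive sg_eq :: "'a set \<Rightarrow> ('a \<times> 'a \<Rightarrow> 'a \<times> 'a) \<Rightarrow> ('a \<times> bool) list \<Rightarrow> ('a \<times> bool) list \<Rightarrow> bool"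
  for X r where
  sg_refl: "w \<in> words_on X \<Longrightarrow> sg_eq X r w w"
| sg_sym: "sg_eq X r w w' \<Longrightarrow> sg_eq X r w' w"
| sg_trans: "sg_eq X r w w' \<Longrightarrow> sg_eq X r w' w'' \<Longrightarrow> sg_eq X r w w''"
| sg_cancel: "u \<in> words_on X \<Longrightarrow> v \<in> words_on X \<Longrightarrow> x \<in> X \<Longrightarrow>
     sg_eq X r (u @ [(x, b), (x, \<not> b)] @ v) (u @ v)"
| sg_rel: "u \<in> words_on X \<Longrightarrow> v \<in> words_on X \<Longrightarrow> x \<in> X \<Longrightarrow> y \<in> X \<Longrightarrow>
     sg_eq X r (u @ [(x, True), (y, True)] @ v)
               (u @ [(fst (r (x, y)), True), (snd (r (x, y)), True)] @ v)"

definition sg_class :: "'a set \<Rightarrow> ('a \<times> 'a \<Rightarrow> 'a \<times> 'a) \<Rightarrow> ('a \<times> bool) list \<Rightarrow> ('a \<times> bool) list set" where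
  "sg_class X r w = {w'. sg_eq X r w w'}"

definition structure_group :: "'a set \<Rightarrow> ('a \<times> 'a \<Rightarrow> 'a \<times> 'a) \<Rightarrow> ('a \<times> bool) list set monoid" where
  "structure_group X r =
     \<lparr>carrier = sg_class X r ` words_on X,
      mult = (\<lambda>C D. sg_class X r ((SOME w. w \<in> C) @ (SOME w. w \<in> D))),
      one = sg_class X r []\<rparr>"

definition sg_iota :: "'a set \<Rightarrow> ('a \<times> 'a \<Rightarrow> 'a \<times> 'a) \<Rightarrow> 'a \<Rightarrow> ('a \<times> bool) list set" where
  "sg_iota X r x = sg_class X r [(x, True)]"

end

theory Submission
  imports Defs
begin

text \<open>
  If K is an ideal of a brace J with J/K abelian, then modulo K the brace operations coincide
  and commute, so the associated solution satisfies \<open>\<lambda>\<^sub>x(y) \<equiv> y\<close> and \<open>\<rho>\<^sub>y(x) \<equiv> x\<close>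
  (mod K). Hence the classes of \<open>X \<inter> J\<close> modulo K form a partition that r decomposes, and
  \<open>X \<inter> J\<close> is r-invariant because J is a subgroup for both operations. Following the
  class of a point \<open>x\<^sub>0 \<in> X \<inter> I\<^sub>n\<^sub>-\<^sub>1\<close> down the soluble chain gives the sets
  \<open>X \<inter> I\<^sub>0 \<supseteq> X \<inter> I\<^sub>1 \<supseteq> \<dots> \<supseteq> X \<inter> I\<^sub>n\<^sub>-\<^sub>1 \<supseteq> {x\<^sub>0}\<close>, the last step because \<open>I\<^sub>n = 0\<close> and
  \<open>\<iota>\<close> is injective.
\<close>

lemma (in subgroup) rcong_mem_iff:
  assumes "group G" and "(a, b) \<in> rcong\<^bsub>G\<^esub> H"
  shows "a \<in> H \<longleftrightarrow> b \<in> H"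
proof -
  interpret group G by fact
  have a: "a \<in> carrier G" and b: "b \<in> carrier G" and ab: "inv a \<otimes> b \<in> H"
    using assms(2) by (auto simp: r_congruent_def)
  show ?thesis
  proof
    assume "a \<in> H"
    then have "a \<otimes> (inv a \<otimes> b) \<in> H" using ab by simp
    then show "b \<in> H" using a b by (simp add: m_assoc [symmetric])
  next
    assume "b \<in> H"
    then have "b \<otimes> inv (inv a \<otimes> b) \<in> H" using ab by simp
    then show "a \<in> H" using a b by (simp add: inv_mult_group m_assoc [symmetric])
  qed
qed

lemma (in normal) rcong_mult:
  assumes "(a, a') \<in> rcong H" and "(b, b') \<in> rcong H"
  shows "(a \<otimes> b, a' \<otimes> b') \<in> rcong H"
proof -
  have [simp]: "a \<in> carrier G" "a' \<in> carrier G" "b \<in> carrier G" "b' \<in> carrier G"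
    and "inv a \<otimes> a' \<in> H" "inv b \<otimes> b' \<in> H"
    using assms by (auto simp: r_congruent_def)
  then have "(inv b \<otimes> (inv a \<otimes> a') \<otimes> b) \<otimes> (inv b \<otimes> b') \<in> H"
    using inv_op_closed1 by simp
  also have "(inv b \<otimes> (inv a \<otimes> a') \<otimes> b) \<otimes> (inv b \<otimes> b') = inv (a \<otimes> b) \<otimes> (a' \<otimes> b')"
    by (simp add: inv_mult_group m_assoc) (simp add: m_assoc [symmetric])
  finally show ?thesis by (simp add: r_congruent_def)
qed

lemma (in normal) rcong_inv:
  assumes "(a, a') \<in> rcong H"
  shows "(inv a, inv a') \<in> rcong H"
proof -
  have [simp]: "a \<in> carrier G" "a' \<in> carrier G" and "inv a \<otimes> a' \<in> H"
    using assms by (auto simp: r_congruent_def)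
  then have "inv (a \<otimes> (inv a \<otimes> a') \<otimes> inv a) \<in> H" using inv_op_closed2 by simp
  also have "inv (a \<otimes> (inv a \<otimes> a') \<otimes> inv a) = inv (inv a) \<otimes> inv a'"
    by (simp add: inv_mult_group m_assoc)
  finally show ?thesis by (simp add: r_congruent_def)
qed

lemma (in normal) rcong_sym: "(a, b) \<in> rcong H \<Longrightarrow> (b, a) \<in> rcong H"
  using equiv_rcong [OF is_group] by (blast elim: equivE dest: symD)

lemma (in normal) rcong_trans: "(a, b) \<in> rcong H \<Longrightarrow> (b, c) \<in> rcong H \<Longrightarrow> (a, c) \<in> rcong H"
  using equiv_rcong [OF is_group] by (blast elim: equivE dest: transD)

lemma (in normal) rcong_refl: "a \<in> carrier G \<Longrightarrow> (a, a) \<in> rcong H"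
  by (simp add: r_congruent_def)

lemma (in subgroup) inv_mult_mem_iff:
  assumes "group G" and "a \<in> H" and "b \<in> carrier G"
  shows "inv a \<otimes> b \<in> H \<longleftrightarrow> b \<in> H"
proof -
  interpret group G by fact
  have "(a, b) \<in> rcong H \<longleftrightarrow> inv a \<otimes> b \<in> H"
    using assms(2,3) by (simp add: r_congruent_def)
  then show ?thesis using rcong_mem_iff [OF assms(1), of a b] assms(2) by blast
qed

locale abelian_brace_quotient =
  A: normal K GA + M: normal K GM
  for K :: "'a set" and GA :: "'a monoid" and GM :: "'a monoid" +
  assumes same_carrier: "carrier GA = carrier GM"
    and abelian: "abelian_quotient GA GM K"
begin

lemma carrier_GA [simp]: "a \<in> carrier GM \<Longrightarrow> a \<in> carrier GA"
  by (simp add: same_carrier)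

lemma add_closed [simp]: "a \<in> carrier GM \<Longrightarrow> b \<in> carrier GM \<Longrightarrow> a \<otimes>\<^bsub>GA\<^esub> b \<in> carrier GM"
  by (metis A.m_closed same_carrier)

lemma neg_closed [simp]: "a \<in> carrier GM \<Longrightarrow> inv\<^bsub>GA\<^esub> a \<in> carrier GM"
  by (metis A.inv_closed same_carrier)

lemma add_rcong_mult:
  "a \<in> carrier GM \<Longrightarrow> b \<in> carrier GM \<Longrightarrow> (a \<otimes>\<^bsub>GA\<^esub> b, a \<otimes>\<^bsub>GM\<^esub> b) \<in> rcong\<^bsub>GA\<^esub> K"
  using abelian unfolding abelian_quotient_def r_congruent_def by simp

lemma add_rcong_commute:
  "a \<in> carrier GM \<Longrightarrow> b \<in> carrier GM \<Longrightarrow> (a \<otimes>\<^bsub>GA\<^esub> b, b \<otimes>\<^bsub>GA\<^esub> a) \<in> rcong\<^bsub>GA\<^esub> K"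
  by (rule A.rcong_sym) (use abelian in \<open>simp add: abelian_quotient_def r_congruent_def\<close>)

lemma lambda_rcong:
  assumes "x \<in> carrier GM" "y \<in> carrier GM"
  shows "(y, brace_lambda GA GM x y) \<in> rcong\<^bsub>GA\<^esub> K"
proof -
  have "(inv\<^bsub>GA\<^esub> x \<otimes>\<^bsub>GA\<^esub> (x \<otimes>\<^bsub>GA\<^esub> y), inv\<^bsub>GA\<^esub> x \<otimes>\<^bsub>GA\<^esub> (x \<otimes>\<^bsub>GM\<^esub> y)) \<in> rcong\<^bsub>GA\<^esub> K"
    using assms by (simp add: A.rcong_mult A.rcong_refl add_rcong_mult)
  then show ?thesis using assms by (simp add: brace_lambda_def A.m_assoc [symmetric])
qed

text \<open>Writing \<open>b = a \<cdot> c\<close>, the congruence \<open>a \<cdot> c \<equiv> a + c\<close> gives \<open>-a + b \<equiv> c\<close>, so \<open>-a + b\<close> and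
  \<open>a\<^sup>-\<^sup>1 b = c\<close> lie in K together.\<close>

lemma rcong_eq: "rcong\<^bsub>GA\<^esub> K = rcong\<^bsub>GM\<^esub> K"
proof -
  have "(a, b) \<in> rcong\<^bsub>GA\<^esub> K \<longleftrightarrow> (a, b) \<in> rcong\<^bsub>GM\<^esub> K" for a b
  proof (cases "a \<in> carrier GM \<and> b \<in> carrier GM")
    case True
    then have a: "a \<in> carrier GM" and b: "b \<in> carrier GM" by auto
    define c where "c = inv\<^bsub>GM\<^esub> a \<otimes>\<^bsub>GM\<^esub> b"
    have c: "c \<in> carrier GM" using a b by (simp add: c_def)
    have "b = a \<otimes>\<^bsub>GM\<^esub> c" using a b by (simp add: c_def M.m_assoc [symmetric])
    then have "(a \<otimes>\<^bsub>GA\<^esub> c, b) \<in> rcong\<^bsub>GA\<^esub> K" using add_rcong_mult a c by simp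
    then have "(inv\<^bsub>GA\<^esub> a \<otimes>\<^bsub>GA\<^esub> (a \<otimes>\<^bsub>GA\<^esub> c), inv\<^bsub>GA\<^esub> a \<otimes>\<^bsub>GA\<^esub> b) \<in> rcong\<^bsub>GA\<^esub> K"
      using a by (simp add: A.rcong_mult A.rcong_refl)
    then have "(c, inv\<^bsub>GA\<^esub> a \<otimes>\<^bsub>GA\<^esub> b) \<in> rcong\<^bsub>GA\<^esub> K"
      using a c by (simp add: A.m_assoc [symmetric])
    then have "c \<in> K \<longleftrightarrow> inv\<^bsub>GA\<^esub> a \<otimes>\<^bsub>GA\<^esub> b \<in> K"
      by (rule A.rcong_mem_iff [OF A.is_group])
    then show ?thesis using a b by (simp add: r_congruent_def c_def same_carrier)
  qed (auto simp: r_congruent_def same_carrier)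
  then show ?thesis by auto
qed

lemma rho_rcong:
  assumes x: "x \<in> carrier GM" and y: "y \<in> carrier GM"
  shows "(x, inv\<^bsub>GM\<^esub> (brace_lambda GA GM x y) \<otimes>\<^bsub>GM\<^esub> x \<otimes>\<^bsub>GM\<^esub> y) \<in> rcong\<^bsub>GA\<^esub> K"
proof -
  let ?u = "brace_lambda GA GM x y"
  have u: "?u \<in> carrier GM" using x y by (simp add: brace_lambda_def)
  have "(x \<otimes>\<^bsub>GM\<^esub> y, y \<otimes>\<^bsub>GM\<^esub> x) \<in> rcong\<^bsub>GA\<^esub> K"
    using x y by (meson A.rcong_sym A.rcong_trans add_rcong_commute add_rcong_mult)
  then have "(x \<otimes>\<^bsub>GM\<^esub> y, y \<otimes>\<^bsub>GM\<^esub> x) \<in> rcong\<^bsub>GM\<^esub> K" by (simp add: rcong_eq)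
  moreover have "(inv\<^bsub>GM\<^esub> ?u, inv\<^bsub>GM\<^esub> y) \<in> rcong\<^bsub>GM\<^esub> K"
    using lambda_rcong [OF x y] by (simp add: rcong_eq M.rcong_inv M.rcong_sym)
  ultimately have "(inv\<^bsub>GM\<^esub> ?u \<otimes>\<^bsub>GM\<^esub> (x \<otimes>\<^bsub>GM\<^esub> y), inv\<^bsub>GM\<^esub> y \<otimes>\<^bsub>GM\<^esub> (y \<otimes>\<^bsub>GM\<^esub> x))
      \<in> rcong\<^bsub>GM\<^esub> K"
    by (simp add: M.rcong_mult)
  then show ?thesis
    using x y u by (simp add: M.m_assoc [symmetric] M.rcong_sym rcong_eq)
qed

end

lemma P_decomposable_quotient:
  assumes R: "equiv Y R"
    and onto: "r ` (Y \<times> Y) = Y \<times> Y"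
    and swap: "\<And>x y u v. x \<in> Y \<Longrightarrow> y \<in> Y \<Longrightarrow> r (x, y) = (u, v) \<Longrightarrow> (y, u) \<in> R \<and> (x, v) \<in> R"
  shows "P_decomposable Y r (Y // R)"
  unfolding P_decomposable_def is_partition_def
proof (intro conjI ballI impI)
  show "\<Union> (Y // R) = Y" using R by (rule Union_quotient)
  show "{} \<notin> Y // R" using R in_quotient_imp_non_empty by blast
  show "P \<inter> Q = {}" if "P \<in> Y // R" "Q \<in> Y // R" "P \<noteq> Q" for P Q
    using quotient_disj [OF R] that by blast
next
  have trans: "(a, b) \<in> R \<Longrightarrow> (b, c) \<in> R \<Longrightarrow> (a, c) \<in> R" for a b c
    using R by (blast elim: equivE dest: transD)
  have sym: "(a, b) \<in> R \<Longrightarrow> (b, a) \<in> R" for a b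
    using R by (blast elim: equivE dest: symD)
  have in_Y: "(a, b) \<in> R \<Longrightarrow> a \<in> Y \<and> b \<in> Y" for a b
    using R by (blast elim: equivE)
  fix P Q assume "P \<in> Y // R" "Q \<in> Y // R"
  then obtain a b where P: "P = R `` {a}" and Q: "Q = R `` {b}"
    by (blast elim: quotientE)
  show "r ` (P \<times> Q) = Q \<times> P"
  proof
    show "r ` (P \<times> Q) \<subseteq> Q \<times> P"
    proof
      fix p assume "p \<in> r ` (P \<times> Q)"
      then obtain x y where "x \<in> P" "y \<in> Q" and p: "p = r (x, y)" by auto
      then have "(a, x) \<in> R" "(b, y) \<in> R" using P Q by auto
      moreover obtain u v where r: "r (x, y) = (u, v)" by fastforce
      ultimately have "(y, u) \<in> R" "(x, v) \<in> R" using swap in_Y by metis+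
      then have "(b, u) \<in> R" "(a, v) \<in> R" using trans \<open>(a, x) \<in> R\<close> \<open>(b, y) \<in> R\<close> by metis+
      then show "p \<in> Q \<times> P" using P Q p r by auto
    qed
    show "Q \<times> P \<subseteq> r ` (P \<times> Q)"
    proof clarify
      fix u v assume "u \<in> Q" "v \<in> P"
      then have bu: "(b, u) \<in> R" and av: "(a, v) \<in> R" using P Q by auto
      then have "(u, v) \<in> r ` (Y \<times> Y)" using onto in_Y by auto
      then obtain x y where xy: "x \<in> Y" "y \<in> Y" and r: "r (x, y) = (u, v)" by auto
      then have "(y, u) \<in> R" "(x, v) \<in> R" using swap by auto
      then have "(a, x) \<in> R" "(b, y) \<in> R" using bu av sym trans by metis+
      then have "x \<in> P" "y \<in> Q" using P Q by auto
      with r show "(u, v) \<in> r ` (P \<times> Q)" by (metis mem_Sigma_iff image_eqI)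
    qed
  qed
qed

lemma equiv_preimage:
  assumes "equiv C S"
  shows "equiv {x \<in> X. f x \<in> C} {(x, y) \<in> X \<times> X. (f x, f y) \<in> S}"
  using assms unfolding equiv_def refl_on_def sym_def trans_def by blast

lemma skew_brace_one_eq:
  assumes "skew_brace A M"
  shows "\<one>\<^bsub>A\<^esub> = \<one>\<^bsub>M\<^esub>"
proof -
  interpret A: group A using assms by (simp add: skew_brace_def)
  interpret M: group M using assms by (simp add: skew_brace_def)
  have carrier: "carrier A = carrier M" using assms by (simp add: skew_brace_def)
  have one_A: "\<one>\<^bsub>A\<^esub> \<in> carrier M" and one_M: "\<one>\<^bsub>M\<^esub> \<in> carrier A"
    using carrier by (metis A.one_closed, metis M.one_closed)
  have "\<one>\<^bsub>M\<^esub> \<otimes>\<^bsub>M\<^esub> (\<one>\<^bsub>A\<^esub> \<otimes>\<^bsub>A\<^esub> \<one>\<^bsub>A\<^esub>)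
      = (\<one>\<^bsub>M\<^esub> \<otimes>\<^bsub>M\<^esub> \<one>\<^bsub>A\<^esub>) \<otimes>\<^bsub>A\<^esub> inv\<^bsub>A\<^esub> \<one>\<^bsub>M\<^esub> \<otimes>\<^bsub>A\<^esub> (\<one>\<^bsub>M\<^esub> \<otimes>\<^bsub>M\<^esub> \<one>\<^bsub>A\<^esub>)"
    using assms one_A unfolding skew_brace_def by blast
  then have "\<one>\<^bsub>A\<^esub> = inv\<^bsub>A\<^esub> \<one>\<^bsub>M\<^esub>" using one_A one_M by simp
  then show ?thesis using one_M by (metis A.inv_inv A.inv_one)
qed

lemma brace_solution_restrict:
  assumes "group A" "group M" "subgroup J A" "subgroup J M" "g \<in> J" "h \<in> J"
  shows "brace_solution (A\<lparr>carrier := J\<rparr>) (M\<lparr>carrier := J\<rparr>) (g, h) = brace_solution A M (g, h)"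
proof -
  interpret A: group A by fact
  interpret M: group M by fact
  have "inv\<^bsub>A\<^esub> g \<otimes>\<^bsub>A\<^esub> (g \<otimes>\<^bsub>M\<^esub> h) \<in> J"
    using assms by (metis M.subgroupE(4) subgroup.m_closed subgroup.m_inv_closed)
  then show ?thesis using assms by (simp add: brace_solution_def brace_lambda_def)
qed

lemma brace_solution_mem_subgroup_iff:
  assumes A: "group A" and M: "group M" and carrier: "carrier A = carrier M"
    and JA: "subgroup J A" and JM: "subgroup J M"
    and g: "g \<in> carrier M" and h: "h \<in> carrier M"
  shows "brace_solution A M (g, h) \<in> J \<times> J \<longleftrightarrow> g \<in> J \<and> h \<in> J"
proof -
  interpret A: group A by fact
  interpret M: group M by fact
  define u where "u = inv\<^bsub>A\<^esub> g \<otimes>\<^bsub>A\<^esub> (g \<otimes>\<^bsub>M\<^esub> h)"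
  define v where "v = inv\<^bsub>M\<^esub> u \<otimes>\<^bsub>M\<^esub> g \<otimes>\<^bsub>M\<^esub> h"
  have sol: "brace_solution A M (g, h) = (u, v)"
    by (simp add: brace_solution_def brace_lambda_def u_def v_def)
  have gA: "g \<in> carrier A" and ghA: "g \<otimes>\<^bsub>M\<^esub> h \<in> carrier A" using g h carrier by auto
  then have uA: "u \<in> carrier A" by (simp add: u_def)
  then have uM: "u \<in> carrier M" using carrier by simp
  have add_u: "g \<otimes>\<^bsub>A\<^esub> u = g \<otimes>\<^bsub>M\<^esub> h"
    using gA ghA by (simp add: u_def A.m_assoc [symmetric])
  have mult_v: "u \<otimes>\<^bsub>M\<^esub> v = g \<otimes>\<^bsub>M\<^esub> h"
    using g h uM by (simp add: v_def M.m_assoc [symmetric])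
  show ?thesis
  proof
    assume "brace_solution A M (g, h) \<in> J \<times> J"
    then have uJ: "u \<in> J" and vJ: "v \<in> J" using sol by auto
    then have ghJ: "g \<otimes>\<^bsub>M\<^esub> h \<in> J" using JM mult_v by (metis subgroup.m_closed)
    have "g = (g \<otimes>\<^bsub>A\<^esub> u) \<otimes>\<^bsub>A\<^esub> inv\<^bsub>A\<^esub> u" using gA uA by (simp add: A.m_assoc)
    then have gJ: "g \<in> J" using JA ghJ uJ add_u by (metis subgroup.m_closed subgroup.m_inv_closed)
    have "h = inv\<^bsub>M\<^esub> g \<otimes>\<^bsub>M\<^esub> (g \<otimes>\<^bsub>M\<^esub> h)" using g h by (simp add: M.m_assoc [symmetric])
    then have "h \<in> J" using JM ghJ gJ by (metis subgroup.m_closed subgroup.m_inv_closed)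
    with gJ show "g \<in> J \<and> h \<in> J" ..
  next
    assume "g \<in> J \<and> h \<in> J"
    then have ghJ: "g \<otimes>\<^bsub>M\<^esub> h \<in> J" and gJ: "g \<in> J" using JM by (auto intro: subgroup.m_closed)
    then have uJ: "u \<in> J" using JA by (simp add: u_def subgroup.m_closed subgroup.m_inv_closed)
    then have "v \<in> J" using JM gJ \<open>g \<in> J \<and> h \<in> J\<close>
      by (simp add: v_def subgroup.m_closed subgroup.m_inv_closed)
    with uJ sol show "brace_solution A M (g, h) \<in> J \<times> J" by simp
  qed
qed

lemma P_decomposable_subbrace:
  fixes \<iota> :: "'a \<Rightarrow> 'b"
  assumes A: "group A" and M: "group M" and carrier: "carrier A = carrier M"
    and JA: "subgroup J A" and JM: "subgroup J M"
    and K: "abelian_brace_quotient K (A\<lparr>carrier := J\<rparr>) (M\<lparr>carrier := J\<rparr>)"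
    and r: "r ` (X \<times> X) = X \<times> X"
    and \<iota>: "\<iota> ` X \<subseteq> carrier M"
    and compat: "\<forall>x\<in>X. \<forall>y\<in>X.
        brace_solution A M (\<iota> x, \<iota> y) = (\<iota> (fst (r (x, y))), \<iota> (snd (r (x, y))))"
  shows "P_decomposable {x \<in> X. \<iota> x \<in> J} r
           ({x \<in> X. \<iota> x \<in> J} // {(x, y) \<in> X \<times> X. (\<iota> x, \<iota> y) \<in> rcong\<^bsub>A\<lparr>carrier := J\<rparr>\<^esub> K})"
    (is "P_decomposable ?Y r (?Y // ?R)")
proof (rule P_decomposable_quotient)
  interpret abelian_brace_quotient K "A\<lparr>carrier := J\<rparr>" "M\<lparr>carrier := J\<rparr>" by fact
  have r_X: "r (x, y) \<in> X \<times> X" if "x \<in> X" "y \<in> X" for x y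
    using r that by blast
  have sol: "brace_solution A M (\<iota> x, \<iota> y) = (\<iota> u, \<iota> v)"
    if "x \<in> X" "y \<in> X" "r (x, y) = (u, v)" for x y u v
    using compat that by (metis fst_conv snd_conv)
  show "equiv ?Y ?R"
    using equiv_preimage [OF A.equiv_rcong [OF A.is_group]] by simp
  have r_Y_iff: "r (x, y) \<in> ?Y \<times> ?Y \<longleftrightarrow> x \<in> ?Y \<and> y \<in> ?Y" if "x \<in> X" "y \<in> X" for x y
  proof -
    obtain u v where uv: "r (x, y) = (u, v)" by fastforce
    then have "u \<in> X" "v \<in> X" using r_X [OF that] by auto
    moreover have "\<iota> u \<in> J \<and> \<iota> v \<in> J \<longleftrightarrow> \<iota> x \<in> J \<and> \<iota> y \<in> J"
      using brace_solution_mem_subgroup_iff [OF A M carrier JA JM] sol [OF that uv] \<iota> that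
      by (metis image_subset_iff mem_Sigma_iff)
    ultimately show ?thesis using uv that by auto
  qed
  show "r ` (?Y \<times> ?Y) = ?Y \<times> ?Y"
  proof
    show "r ` (?Y \<times> ?Y) \<subseteq> ?Y \<times> ?Y" using r_Y_iff by blast
    show "?Y \<times> ?Y \<subseteq> r ` (?Y \<times> ?Y)"
    proof
      fix p assume p: "p \<in> ?Y \<times> ?Y"
      then have "p \<in> r ` (X \<times> X)" using r by auto
      then obtain x y where "x \<in> X" "y \<in> X" "p = r (x, y)" by auto
      with p r_Y_iff show "p \<in> r ` (?Y \<times> ?Y)" by auto
    qed
  qed
  show "(y, u) \<in> ?R \<and> (x, v) \<in> ?R" if "x \<in> ?Y" "y \<in> ?Y" "r (x, y) = (u, v)" for x y u v
  proof -
    have "u \<in> X" "v \<in> X" using r_X that by fastforce+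
    moreover have "brace_solution (A\<lparr>carrier := J\<rparr>) (M\<lparr>carrier := J\<rparr>) (\<iota> x, \<iota> y) = (\<iota> u, \<iota> v)"
      using that sol brace_solution_restrict [OF A M JA JM] by auto
    then have "\<iota> u = brace_lambda (A\<lparr>carrier := J\<rparr>) (M\<lparr>carrier := J\<rparr>) (\<iota> x) (\<iota> y)"
      and "\<iota> v = inv\<^bsub>M\<lparr>carrier := J\<rparr>\<^esub> (\<iota> u) \<otimes>\<^bsub>M\<lparr>carrier := J\<rparr>\<^esub> \<iota> x \<otimes>\<^bsub>M\<lparr>carrier := J\<rparr>\<^esub> \<iota> y"
      by (auto simp: brace_solution_def)
    ultimately show ?thesis
      using lambda_rcong [of "\<iota> x" "\<iota> y"] rho_rcong [of "\<iota> x" "\<iota> y"] that by auto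
  qed
qed

lemma soluble_chain_step:
  assumes "soluble_chain A M I n" and "i < n"
  shows "I (Suc i) \<subseteq> I i"
    and "brace_ideal (A\<lparr>carrier := I i\<rparr>) (M\<lparr>carrier := I i\<rparr>) (I (Suc i))"
    and "abelian_quotient (A\<lparr>carrier := I i\<rparr>) (M\<lparr>carrier := I i\<rparr>) (I (Suc i))"
  using assms unfolding soluble_chain_def
  by (metis Suc_leI diff_Suc_1 le_add1 plus_1_eq_Suc)+

lemma soluble_chain_antimono:
  assumes "soluble_chain A M I n" and "i \<le> j" and "j \<le> n"
  shows "I j \<subseteq> I i"
proof -
  have "I (min (Suc k) n) \<subseteq> I (min k n)" for k
    using soluble_chain_step(1) [OF assms(1)] by (cases "k < n") (simp_all add: min_def)
  then have "I (min j n) \<subseteq> I (min i n)"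
    using lift_Suc_antimono_le [of "\<lambda>k. I (min k n)"] assms(2) by blast
  then show ?thesis using assms(2,3) by (simp add: min_def)
qed

lemma soluble_chain_subgroup:
  assumes brace: "skew_brace A M" and chain: "soluble_chain A M I n" and i: "i < n"
  shows "subgroup (I i) A" and "subgroup (I i) M"
proof -
  have A: "group A" and M: "group M" and carrier: "carrier A = carrier M"
    using brace by (auto simp: skew_brace_def)
  have "I i \<subseteq> carrier M"
    using chain soluble_chain_antimono [OF chain, of 0 i] i by (simp add: soluble_chain_def)
  moreover have "group (A\<lparr>carrier := I i\<rparr>)" and "group (M\<lparr>carrier := I i\<rparr>)"
    using soluble_chain_step(2) [OF chain i] by (auto simp: brace_ideal_def normal_def)
  ultimately show "subgroup (I i) A" and "subgroup (I i) M"
    using group.group_incl_imp_subgroup [OF A] group.group_incl_imp_subgroup [OF M] carrier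
    by auto
qed

lemma soluble_chain_abelian_brace_quotient:
  assumes "soluble_chain A M I n" and "i < n"
  shows "abelian_brace_quotient (I (Suc i)) (A\<lparr>carrier := I i\<rparr>) (M\<lparr>carrier := I i\<rparr>)"
  using soluble_chain_step(2,3) [OF assms]
  by (simp add: abelian_brace_quotient_def abelian_brace_quotient_axioms_def brace_ideal_def)

lemma soluble_chain_level_decomposable:
  fixes \<iota> :: "'a \<Rightarrow> 'b"
  assumes brace: "skew_brace A M" and chain: "soluble_chain A M I n" and i: "i < n"
    and r: "r ` (X \<times> X) = X \<times> X"
    and \<iota>: "\<iota> ` X \<subseteq> carrier M"
    and compat: "\<forall>x\<in>X. \<forall>y\<in>X.
        brace_solution A M (\<iota> x, \<iota> y) = (\<iota> (fst (r (x, y))), \<iota> (snd (r (x, y))))"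
    and x0: "x0 \<in> X" "\<iota> x0 \<in> I i"
  shows "\<exists>P. P_decomposable {x \<in> X. inv\<^bsub>A\<^esub> (\<iota> x0) \<otimes>\<^bsub>A\<^esub> \<iota> x \<in> I i} r P
           \<and> {x \<in> X. inv\<^bsub>A\<^esub> (\<iota> x0) \<otimes>\<^bsub>A\<^esub> \<iota> x \<in> I (Suc i)} \<in> P"
proof -
  have A: "group A" and M: "group M" and carrier: "carrier A = carrier M"
    using brace by (auto simp: skew_brace_def)
  interpret A: group A by fact
  have JA: "subgroup (I i) A" and JM: "subgroup (I i) M"
    using soluble_chain_subgroup [OF brace chain i] by auto
  have KJ: "I (Suc i) \<subseteq> I i" using soluble_chain_step(1) [OF chain i] .
  define R where "R = {(x, y) \<in> X \<times> X. (\<iota> x, \<iota> y) \<in> rcong\<^bsub>A\<lparr>carrier := I i\<rparr>\<^esub> I (Suc i)}"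
  have \<iota>A: "\<iota> x \<in> carrier A" if "x \<in> X" for x using \<iota> carrier that by auto
  have mem_iff: "inv\<^bsub>A\<^esub> (\<iota> x0) \<otimes>\<^bsub>A\<^esub> \<iota> x \<in> I i \<longleftrightarrow> \<iota> x \<in> I i" if "x \<in> X" for x
    using subgroup.inv_mult_mem_iff [OF JA A x0(2) \<iota>A [OF that]] .
  then have "{x \<in> X. inv\<^bsub>A\<^esub> (\<iota> x0) \<otimes>\<^bsub>A\<^esub> \<iota> x \<in> I i} = {x \<in> X. \<iota> x \<in> I i}"
    by blast
  moreover have "{x \<in> X. inv\<^bsub>A\<^esub> (\<iota> x0) \<otimes>\<^bsub>A\<^esub> \<iota> x \<in> I (Suc i)} = R `` {x0}"
  proof -
    have "(x0, x) \<in> R \<longleftrightarrow> x \<in> X \<and> inv\<^bsub>A\<^esub> (\<iota> x0) \<otimes>\<^bsub>A\<^esub> \<iota> x \<in> I (Suc i)" for x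
      using x0 KJ mem_iff [of x] by (auto simp: R_def r_congruent_def JA)
    then show ?thesis by blast
  qed
  moreover have "R `` {x0} \<in> {x \<in> X. \<iota> x \<in> I i} // R"
    using x0 by (auto intro: quotientI)
  moreover have "P_decomposable {x \<in> X. \<iota> x \<in> I i} r ({x \<in> X. \<iota> x \<in> I i} // R)"
    unfolding R_def
    by (rule P_decomposable_subbrace [OF A M carrier JA JM
          soluble_chain_abelian_brace_quotient [OF chain i] r \<iota> compat])
  ultimately show ?thesis by auto
qed

lemma multidecomposable_of_soluble_chain:
  fixes \<iota> :: "'a \<Rightarrow> 'b"
  assumes brace: "skew_brace A M" and chain: "soluble_chain A M I n"
    and r: "r ` (X \<times> X) = X \<times> X"
    and \<iota>: "\<iota> ` X \<subseteq> carrier M" and inj: "inj_on \<iota> X"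
    and compat: "\<forall>x\<in>X. \<forall>y\<in>X.
        brace_solution A M (\<iota> x, \<iota> y) = (\<iota> (fst (r (x, y))), \<iota> (snd (r (x, y))))"
    and x0: "x0 \<in> X" "\<iota> x0 \<in> I (n - 1)"
  shows "multidecomposable X r"
proof -
  interpret A: group A using brace by (simp add: skew_brace_def)
  have carrier: "carrier A = carrier M" using brace by (simp add: skew_brace_def)
  then have \<iota>A: "\<iota> ` X \<subseteq> carrier A" using \<iota> by simp
  txt \<open>The part of X in the additive coset \<open>\<iota> x0 + I k\<close>: it is \<open>X \<inter> I k\<close> for \<open>k < n\<close>, and \<open>{x0}\<close>
    for \<open>k = n\<close>.\<close>
  define Xs where "Xs k = {x \<in> X. inv\<^bsub>A\<^esub> (\<iota> x0) \<otimes>\<^bsub>A\<^esub> \<iota> x \<in> I k}" for k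
  have "I 0 = carrier A" using chain carrier by (simp add: soluble_chain_def)
  then have "Xs 0 = X" using \<iota>A x0 by (auto simp: Xs_def)
  moreover have "Xs n = {x0}"
  proof -
    have "I n = {\<one>\<^bsub>A\<^esub>}" using chain skew_brace_one_eq [OF brace] by (simp add: soluble_chain_def)
    moreover have "inv\<^bsub>A\<^esub> (\<iota> x0) \<otimes>\<^bsub>A\<^esub> \<iota> x = \<one>\<^bsub>A\<^esub> \<longleftrightarrow> x = x0" if "x \<in> X" for x
    proof -
      have "\<iota> x0 \<in> carrier A" "\<iota> x \<in> carrier A" using \<iota>A x0 that by auto
      then show ?thesis
        using A.inv_solve_left' [of "\<one>\<^bsub>A\<^esub>" "\<iota> x0" "\<iota> x"] inj_onD [OF inj] x0 that by auto
    qed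
    ultimately show ?thesis using x0 by (auto simp: Xs_def)
  qed
  moreover have "Xs (Suc i) \<subseteq> Xs i \<and> (\<exists>P. P_decomposable (Xs i) r P \<and> Xs (Suc i) \<in> P)"
    if "i < n" for i
  proof
    show "Xs (Suc i) \<subseteq> Xs i" using soluble_chain_step(1) [OF chain that] by (auto simp: Xs_def)
    have "i \<le> n - 1" using that by simp
    then have "\<iota> x0 \<in> I i" using soluble_chain_antimono [OF chain, of i "n - 1"] x0 by auto
    then show "\<exists>P. P_decomposable (Xs i) r P \<and> Xs (Suc i) \<in> P"
      unfolding Xs_def by (rule soluble_chain_level_decomposable [OF brace chain that r \<iota> compat x0(1)])
  qed
  ultimately show ?thesis
    unfolding multidecomposable_def by (intro exI [of _ n] exI [of _ Xs]) simp
qed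

theorem theoremD:
  fixes X :: "'a set" and r :: "'a \<times> 'a \<Rightarrow> 'a \<times> 'a"
    and A :: "('a \<times> bool) list set monoid"
    and I :: "nat \<Rightarrow> ('a \<times> bool) list set set" and n :: nat
  assumes sol: "nondeg_solution X r"
    and brace: "skew_brace A (structure_group X r)"
    and compat: "\<forall>x\<in>X. \<forall>y\<in>X.
        brace_solution A (structure_group X r) (sg_iota X r x, sg_iota X r y)
        = (sg_iota X r (fst (r (x, y))), sg_iota X r (snd (r (x, y))))"
    and inj: "inj_on (sg_iota X r) X"
    and sol_brace: "soluble_brace A (structure_group X r)"
    and n_pos: "1 \<le> n"
    and chain: "soluble_chain A (structure_group X r) I n"
    and meet: "sg_iota X r ` X \<inter> I (n - 1) \<noteq> {}"
  shows "multidecomposable X r"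
proof -
  have "sg_iota X r ` X \<subseteq> carrier (structure_group X r)"
    by (auto simp: sg_iota_def structure_group_def words_on_def)
  moreover have "r ` (X \<times> X) = X \<times> X"
    using sol by (simp add: nondeg_solution_def bij_betw_def)
  moreover obtain x0 where "x0 \<in> X" "sg_iota X r x0 \<in> I (n - 1)" using meet by blast
  ultimately show ?thesis
    using multidecomposable_of_soluble_chain [OF brace chain _ _ inj compat] by blast
qed

end
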